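(* Let $\mathfrak L$ be a complete lattice, $f:\mathfrak L\to\mathfrak L$ monotone, write $\nu^\alpha$ for $\nu^\alpha f$, let $\phi:\mathcal O\to\mathcal O$ and let $\lambda\in\mathcal O$ be a nonzero limit ordinal. Then $\limsup_{\alpha\to\lambda}\nu^{\phi(\alpha)}=\nu^{\liminf_\lambda\phi}$.
   Context: $\mathcal O$ is the set of ordinals $\le\top_{\mathsf{ord}}$ for a fixed ordinal $\top_{\mathsf{ord}}$ ($=\beth_\omega$), a complete lattice. For $g:\mathcal O\to\mathfrak L$ into a complete lattice: $\liminf_\lambda g=\liminf_{\alpha\to\lambda}g(\alpha)=\sup_{\alpha_0<\lambda}\inf_{\alpha_0\le\alpha<\lambda}g(\alpha)$, $\limsup_{\alpha\to\lambda}g(\alpha)=\inf_{\alpha_0<\lambda}\sup_{\alpha_0\le\alpha<\lambda}g(\alpha)$. For $f:\mathfrak L\to\mathfrak L$ and $g\in\mathfrak L$: $f^0(g)=g$, $f^{\alpha+1}(g)=f(f^\alpha(g))$, $f^\lambda(g)=\limsup_{\alpha\to\lambda}f^\alpha(g)$; $\nu^\alpha f:=f^\alpha(\top)$. *)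

theory Defs
  imports Main
begin

text \<open>Ordinals are modelled by a type 'o that is both well-ordered and a complete
lattice (exactly the initial segments of ordinals with a top element, such as
the ordinals up to beth_omega).\<close>

definition liminf_at :: "('o::wellorder \<Rightarrow> 'L::complete_lattice) \<Rightarrow> 'o \<Rightarrow> 'L" where
  "liminf_at g l = (SUP a0\<in>{..<l}. INF a\<in>{a0..<l}. g a)"

definition limsup_at :: "('o::wellorder \<Rightarrow> 'L::complete_lattice) \<Rightarrow> 'o \<Rightarrow> 'L" where
  "limsup_at g l = (INF a0\<in>{..<l}. SUP a\<in>{a0..<l}. g a)"

text \<open>Transfinite iteration: f^0 g = g, f^(a+1) g = f (f^a g),
  f^l g = limsup_(a -> l) f^a g at nonzero limits l.
  An ordinal a is a successor iff the set of ordinals below it has a greatest element.\<close>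

definition trans_iter ::
  "('L::complete_lattice \<Rightarrow> 'L) \<Rightarrow> 'L \<Rightarrow> 'o::{wellorder,complete_lattice} \<Rightarrow> 'L" where
  "trans_iter f g = wfrec {(x, y). x < y}
     (\<lambda>r a. if a = bot then g
            else if (\<exists>b<a. \<forall>c<a. c \<le> b) then f (r (GREATEST b. b < a))
            else limsup_at r a)"

definition nu :: "('L::complete_lattice \<Rightarrow> 'L) \<Rightarrow> 'o::{wellorder,complete_lattice} \<Rightarrow> 'L" where
  "nu f a = trans_iter f top a"

end

theory Submission
  imports Defs
begin

text \<open>The sequence \<open>\<nu>\<^sup>\<alpha>\<close> is decreasing, and at every limit it is the infimum of its
predecessors; hence it maps the supremum of any nonempty set of ordinals to the infimum
of its values. Since infima of nonempty sets of ordinals are attained, the supremum of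
\<open>\<nu>\<^bsup>\<phi>(\<alpha>)\<^esup>\<close> over a tail \<open>\<alpha>\<^sub>0 \<le> \<alpha> < \<lambda>\<close> is \<open>\<nu>\<close> of the infimum of \<open>\<phi>\<close> over that tail,
and the outer infimum over \<open>\<alpha>\<^sub>0\<close> turns into \<open>\<nu>\<close> of the supremum, i.e. of
\<open>liminf\<^sub>\<lambda> \<phi>\<close>.\<close>

lemma trans_iter_unfold:
  fixes a :: "'o::{wellorder,complete_lattice}"
  shows "trans_iter f g a = (if a = bot then g
     else if (\<exists>b<a. \<forall>c<a. c \<le> b) then f (trans_iter f g (GREATEST b. b < a))
     else limsup_at (trans_iter f g) a)"
proof -
  have limsup_cut: "limsup_at (cut (trans_iter f g) {(x, y). x < y} a) a
      = limsup_at (trans_iter f g) a"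
    unfolding limsup_at_def by (intro INF_cong SUP_cong refl) (auto simp: cut_apply)
  have "(GREATEST b. b < a) < a" if "\<exists>b<a. \<forall>c<a. c \<le> b"
  proof -
    from that obtain b where "b < a" "\<forall>c<a. c \<le> b" by blast
    then have "(GREATEST b. b < a) = b" by (intro Greatest_equality) auto
    with \<open>b < a\<close> show ?thesis by simp
  qed
  with limsup_cut show ?thesis
    unfolding trans_iter_def by (subst wfrec[OF wf]) (auto simp: cut_apply)
qed

lemma trans_iter_bot: "trans_iter f g (bot::'o::{wellorder,complete_lattice}) = g"
  by (subst trans_iter_unfold) simp

lemma trans_iter_succ:
  fixes a b :: "'o::{wellorder,complete_lattice}"
  assumes "b < a" and "\<forall>c<a. c \<le> b"
  shows "trans_iter f g a = f (trans_iter f g b)"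
proof -
  have "(GREATEST b. b < a) = b" using assms by (intro Greatest_equality) auto
  with assms show ?thesis by (subst trans_iter_unfold) auto
qed

lemma trans_iter_limit:
  fixes a :: "'o::{wellorder,complete_lattice}"
  assumes "a \<noteq> bot" and "\<not> (\<exists>b<a. \<forall>c<a. c \<le> b)"
  shows "trans_iter f g a = limsup_at (trans_iter f g) a"
  using assms by (subst trans_iter_unfold) auto

lemma nu_limit_limsup:
  fixes a :: "'o::{wellorder,complete_lattice}"
  assumes "a \<noteq> bot" and "\<not> (\<exists>b<a. \<forall>c<a. c \<le> b)"
  shows "nu f a = limsup_at (nu f) a"
  unfolding nu_def by (rule trans_iter_limit[OF assms])

lemma limsup_at_antimono:
  fixes g :: "'o::wellorder \<Rightarrow> 'L::complete_lattice"
  assumes "\<And>b c. b \<le> c \<Longrightarrow> c < a \<Longrightarrow> g c \<le> g b"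
  shows "limsup_at g a = (INF c\<in>{..<a}. g c)"
proof -
  have "(SUP x\<in>{c..<a}. g x) = g c" if "c < a" for c
    using that assms by (intro antisym SUP_least SUP_upper) auto
  then show ?thesis unfolding limsup_at_def by (intro INF_cong) auto
qed

text \<open>The post-fixpoint half is carried through the induction because it yields
\<open>\<nu>\<^bsup>p+1\<^esup> = f \<nu>\<^sup>p \<le> \<nu>\<^sup>p\<close> at successors.\<close>

lemma nu_antimono_postfixpoint:
  fixes f :: "'L::complete_lattice \<Rightarrow> 'L" and a :: "'o::{wellorder,complete_lattice}"
  assumes "mono f"
  shows "(\<forall>b\<le>a. nu f a \<le> nu f b) \<and> f (nu f a) \<le> nu f a"
proof (induction a rule: less_induct)
  case (less a)
  have antimono_below: "nu f c \<le> nu f b" if "b \<le> c" "c < a" for b c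
    using less.IH[OF that(2)] that(1) by simp
  consider "a = bot"
    | (succ) p where "p < a" "\<forall>c<a. c \<le> p"
    | (limit) "a \<noteq> bot" "\<not> (\<exists>b<a. \<forall>c<a. c \<le> b)"
    by blast
  then show ?case
  proof cases
    case 1
    then show ?thesis by (simp add: nu_def trans_iter_bot bot_unique)
  next
    case succ
    have nu_a: "nu f a = f (nu f p)" unfolding nu_def by (rule trans_iter_succ[OF succ])
    have below_p: "nu f a \<le> nu f p" using less.IH[OF succ(1)] nu_a by simp
    have "\<forall>b\<le>a. nu f a \<le> nu f b"
    proof (intro allI impI)
      fix b assume "b \<le> a"
      show "nu f a \<le> nu f b"
      proof (cases "b = a")
        case False
        with \<open>b \<le> a\<close> succ have "b \<le> p" by auto
        from below_p antimono_below[OF this succ(1)] show ?thesis by (rule order_trans)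
      qed simp
    qed
    moreover have "f (nu f a) \<le> nu f a" using monoD[OF \<open>mono f\<close> below_p] nu_a by simp
    ultimately show ?thesis ..
  next
    case limit
    have nu_a: "nu f a = (INF c\<in>{..<a}. nu f c)"
      unfolding nu_limit_limsup[OF limit] using antimono_below by (rule limsup_at_antimono)
    have below: "nu f a \<le> nu f c" if "c < a" for c
      using that unfolding nu_a by (simp add: INF_lower)
    have "f (nu f a) \<le> nu f c" if "c < a" for c
    proof -
      have "f (nu f a) \<le> f (nu f c)" using below[OF that] \<open>mono f\<close> by (rule monoD[rotated])
      also have "\<dots> \<le> nu f c" using less.IH[OF that] by simp
      finally show ?thesis .
    qed
    then have "f (nu f a) \<le> nu f a" unfolding nu_a by (simp add: le_INF_iff)
    moreover have "\<forall>b\<le>a. nu f a \<le> nu f b"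
      using below by (auto simp: order.order_iff_strict)
    ultimately show ?thesis by (intro conjI)
  qed
qed

lemma nu_antimono:
  assumes "mono f" and "(b::'o::{wellorder,complete_lattice}) \<le> a"
  shows "nu f a \<le> nu f b"
  using nu_antimono_postfixpoint[OF assms(1), of a] assms(2) by simp

lemma nu_limit:
  fixes a :: "'o::{wellorder,complete_lattice}"
  assumes "mono f" and "a \<noteq> bot" and "\<not> (\<exists>b<a. \<forall>c<a. c \<le> b)"
  shows "nu f a = (INF c\<in>{..<a}. nu f c)"
  unfolding nu_limit_limsup[OF assms(2,3)] using nu_antimono[OF assms(1)] by (rule limsup_at_antimono)

lemma nu_Sup:
  fixes S :: "'o::{wellorder,complete_lattice} set"
  assumes "mono f" and "S \<noteq> {}"
  shows "nu f (Sup S) = (INF s\<in>S. nu f s)"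
proof (cases "Sup S \<in> S")
  case True
  show ?thesis
  proof (rule antisym)
    show "nu f (Sup S) \<le> (INF s\<in>S. nu f s)"
      by (rule INF_greatest, rule nu_antimono[OF \<open>mono f\<close>], rule Sup_upper)
    show "(INF s\<in>S. nu f s) \<le> nu f (Sup S)"
      using True by (rule INF_lower)
  qed
next
  case False
  have below_Sup: "s < Sup S" if "s \<in> S" for s
    using that Sup_upper[OF that] False by (cases "s = Sup S") auto
  have exceeds: "\<exists>s\<in>S. c < s" if "c < Sup S" for c
  proof (rule ccontr)
    assume "\<not> (\<exists>s\<in>S. c < s)"
    then have "Sup S \<le> c" by (intro Sup_least) (simp add: not_less)
    with that show False by simp
  qed
  from \<open>S \<noteq> {}\<close> obtain s0 where "s0 \<in> S" by blast
  then have "Sup S \<noteq> bot" using below_Sup bot.extremum_strict by metis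
  moreover have "\<not> (\<exists>b<Sup S. \<forall>c<Sup S. c \<le> b)"
  proof
    assume "\<exists>b<Sup S. \<forall>c<Sup S. c \<le> b"
    then obtain b where "b < Sup S" and b_max: "\<forall>c<Sup S. c \<le> b" by blast
    with exceeds obtain s where "s \<in> S" "b < s" by blast
    moreover have "s \<le> b" using b_max below_Sup[OF \<open>s \<in> S\<close>] by simp
    ultimately show False by simp
  qed
  ultimately have "nu f (Sup S) = (INF c\<in>{..<Sup S}. nu f c)"
    by (rule nu_limit[OF \<open>mono f\<close>])
  also have "\<dots> = (INF s\<in>S. nu f s)"
  proof (rule antisym)
    show "(INF c\<in>{..<Sup S}. nu f c) \<le> (INF s\<in>S. nu f s)"
    proof (rule INF_greatest)
      fix s assume "s \<in> S"
      then show "(INF c\<in>{..<Sup S}. nu f c) \<le> nu f s" using below_Sup by (intro INF_lower) simp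
    qed
    show "(INF s\<in>S. nu f s) \<le> (INF c\<in>{..<Sup S}. nu f c)"
    proof (rule INF_greatest)
      fix c assume "c \<in> {..<Sup S}"
      with exceeds obtain s where "s \<in> S" "c < s" by auto
      then have "(INF s\<in>S. nu f s) \<le> nu f s" by (intro INF_lower)
      also have "\<dots> \<le> nu f c" using \<open>c < s\<close> by (intro nu_antimono[OF \<open>mono f\<close>]) simp
      finally show "(INF s\<in>S. nu f s) \<le> nu f c" .
    qed
  qed
  finally show ?thesis .
qed

lemma SUP_comp_eq_INF:
  fixes g :: "'o::{wellorder,complete_lattice} \<Rightarrow> 'L::complete_lattice"
  assumes g_Sup: "\<And>S. S \<noteq> {} \<Longrightarrow> g (Sup S) = (INF s\<in>S. g s)"
    and "A \<noteq> {}"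
  shows "(SUP a\<in>A. g (\<phi> a)) = g (INF a\<in>A. \<phi> a)"
proof -
  have antimono: "g c \<le> g b" if "b \<le> c" for b c
    using g_Sup[of "{b, c}"] that by (simp add: sup_absorb2 le_iff_inf inf.commute)
  obtain a1 where "a1 \<in> A" and attained: "(INF a\<in>A. \<phi> a) = \<phi> a1"
    using wellorder_InfI[of _ "\<phi> ` A"] \<open>A \<noteq> {}\<close> by blast
  show ?thesis
  proof (rule antisym)
    show "(SUP a\<in>A. g (\<phi> a)) \<le> g (INF a\<in>A. \<phi> a)"
      by (intro SUP_least antimono INF_lower)
    show "g (INF a\<in>A. \<phi> a) \<le> (SUP a\<in>A. g (\<phi> a))"
      unfolding attained using \<open>a1 \<in> A\<close> by (rule SUP_upper)
  qed
qed

lemma limsup_at_comp_eq_liminf_at: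
  fixes g :: "'o::{wellorder,complete_lattice} \<Rightarrow> 'L::complete_lattice"
    and \<phi> :: "'i::wellorder \<Rightarrow> 'o"
  assumes g_Sup: "\<And>S. S \<noteq> {} \<Longrightarrow> g (Sup S) = (INF s\<in>S. g s)"
    and "{..<l} \<noteq> {}"
  shows "limsup_at (\<lambda>a. g (\<phi> a)) l = g (liminf_at \<phi> l)"
proof -
  have "limsup_at (\<lambda>a. g (\<phi> a)) l = (INF a0\<in>{..<l}. g (INF a\<in>{a0..<l}. \<phi> a))"
    unfolding limsup_at_def by (intro INF_cong refl SUP_comp_eq_INF[OF g_Sup]) auto
  also have "\<dots> = g (liminf_at \<phi> l)"
    unfolding liminf_at_def using \<open>{..<l} \<noteq> {}\<close> by (subst g_Sup) (simp_all add: image_image)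
  finally show ?thesis .
qed

theorem corollary4p14:
  fixes f :: "'L::complete_lattice \<Rightarrow> 'L"
    and \<phi> :: "'o::{wellorder,complete_lattice} \<Rightarrow> 'o"
    and l :: 'o
  assumes "mono f"
    and "l \<noteq> bot"
    and "\<forall>b<l. \<exists>c. b < c \<and> c < l"
  shows "limsup_at (\<lambda>a. nu f (\<phi> a)) l = nu f (liminf_at \<phi> l)"
proof (rule limsup_at_comp_eq_liminf_at)
  show "nu f (Sup S) = (INF s\<in>S. nu f s)" if "S \<noteq> {}" for S
    using \<open>mono f\<close> that by (rule nu_Sup)
  show "{..<l} \<noteq> {}" using \<open>l \<noteq> bot\<close> by (metis bot_less lessThan_iff empty_iff)
qed

end
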